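(* Let $G$ be a finite group and $K$ a field in which $|G|$ is invertible. Let $V\le G$ and let $(f_U)_{U\in\widehat\Sigma_G}=\sigma_G(\Delta(e_V))$. If $U\in\widehat\Sigma_G$ is not isomorphic to $V$ then $f_U=0$. If $U\in\widehat\Sigma_G$ is isomorphic to $V$ then $f_U$ is the projection of $K\overline{\mathrm{Inj}}(U,G)=\bigoplus_{C}K\overline{\mathrm{Inj}}(U,G)_C$ onto the summand indexed by the $G$-conjugacy class $C$ of $V$, where $C$ runs over the $G$-conjugacy classes of subgroups of $G$ isomorphic to $U$ and $K\overline{\mathrm{Inj}}(U,G)_C$ is spanned by the $[\lambda]$ with $\lambda(U)\in C$.
   Context: $B(G)$ is the Burnside ring with marks $\Phi_H([X])=|X^H|$; $e_V\in KB(G)$ is the element with $\Phi_{V'}(e_V)=1$ if $V'$ is $G$-conjugate to $V$ and $0$ otherwise. Finite $(G,G)$-bisets are left $G\times G$-sets via $(g,h)x=gxh^{-1}$; $B^\Delta(G,G)$ is the Grothendieck ring (product induced by $X\times_G Y$) of bisets whose point stabilizers $L$ satisfy $\{g\mid(g,1)\in L\}=\{g\mid(1,g)\in L\}=1$; $\Phi_L$ denotes marks on $G\times G$-sets. $\Delta\colon KB(G)\to KB^\Delta(G,G)$ is the $K$-linear ring homomorphism $[G/W]\mapsto[G\times G/\{(w,w)\mid w\in W\}]$. $\mathrm{Inj}(U,G)$: injective homomorphisms $U\to G$ with $G$ acting by $\lambda\mapsto c_g\lambda$ and $\mathrm{Aut}(U)$ on the right by composition; $\overline{\mathrm{Inj}}(U,G)=G\backslash\mathrm{Inj}(U,G)$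 (elements $[\lambda]$), a right $\mathrm{Out}(U)$-set. $\widehat\Sigma_G$: representatives of isomorphism classes of subgroups of $G$. $\sigma_G\colon KB^\Delta(G,G)\to\prod_{U\in\widehat\Sigma_G}\mathrm{End}_{K\mathrm{Out}(U)}(K\overline{\mathrm{Inj}}(U,G))$ is $a\mapsto\bigl([\mu]\mapsto\sum_{[\lambda]\in\overline{\mathrm{Inj}}(U,G)}\frac{\Phi_{\{(\lambda(u),\mu(u))\mid u\in U\}}(a)}{|C_G(\lambda(U))|}[\lambda]\bigr)_U$. *)

theory Defs
  imports "HOL-Algebra.Algebra"
begin

definition lcosets_of :: "('a, 'b) monoid_scheme \<Rightarrow> 'a set \<Rightarrow> 'a set set" where
  "lcosets_of G H = (\<lambda>g. l_coset G g H) ` carrier G"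

definition fixed_cosets :: "('a, 'b) monoid_scheme \<Rightarrow> 'a set \<Rightarrow> 'a set \<Rightarrow> 'a set set" where
  "fixed_cosets G H L = {Z. Z \<in> lcosets_of G H \<and> (\<forall>y\<in>L. l_coset G y Z = Z)}"

(* An element a = sum_W c(W) [G/W] of KB(G) is given by a coefficient function c
   on subgroups.  Its mark at H: Phi_H(a) = sum_W c(W) |(G/W)^H|. *)
definition markB :: "('a, 'b) monoid_scheme \<Rightarrow> ('a set \<Rightarrow> 'k::field) \<Rightarrow> 'a set \<Rightarrow> 'k" where
  "markB G c H = (\<Sum>W\<in>{W. subgroup W G}. c W * of_nat (card (fixed_cosets G W H)))"

definition diag :: "'a set \<Rightarrow> ('a \<times> 'a) set" where
  "diag W = (\<lambda>w. (w, w)) ` W"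

(* Marks of Delta(a) = sum_W c(W) [G x G / Delta W] at a subgroup L of G x G *)
definition markDelta :: "('a, 'b) monoid_scheme \<Rightarrow> ('a set \<Rightarrow> 'k::field) \<Rightarrow> ('a \<times> 'a) set \<Rightarrow> 'k" where
  "markDelta G c L = (\<Sum>W\<in>{W. subgroup W G}. c W * of_nat (card (fixed_cosets (G \<times>\<times> G) (diag W) L)))"

definition conjugate :: "('a, 'b) monoid_scheme \<Rightarrow> 'a set \<Rightarrow> 'a set \<Rightarrow> bool" where
  "conjugate G V' V = (\<exists>g\<in>carrier G. V' = (\<lambda>v. g \<otimes>\<^bsub>G\<^esub> v \<otimes>\<^bsub>G\<^esub> inv\<^bsub>G\<^esub> g) ` V)"

definition Inj :: "('a, 'b) monoid_scheme \<Rightarrow> 'a set \<Rightarrow> ('a \<Rightarrow> 'a) set" where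
  "Inj G U = {l. l \<in> extensional U \<and> l \<in> hom (G\<lparr>carrier := U\<rparr>) G \<and> inj_on l U}"

definition InjBar :: "('a, 'b) monoid_scheme \<Rightarrow> 'a set \<Rightarrow> ('a \<Rightarrow> 'a) set set" where
  "InjBar G U = (\<lambda>l. {restrict (\<lambda>u. g \<otimes>\<^bsub>G\<^esub> l u \<otimes>\<^bsub>G\<^esub> inv\<^bsub>G\<^esub> g) U | g. g \<in> carrier G}) ` Inj G U"

definition centralizer_of :: "('a, 'b) monoid_scheme \<Rightarrow> 'a set \<Rightarrow> 'a set" where
  "centralizer_of G S = {g. g \<in> carrier G \<and> (\<forall>x\<in>S. g \<otimes>\<^bsub>G\<^esub> x = x \<otimes>\<^bsub>G\<^esub> g)}"

(* coefficient of [lambda] in sigma_G(Delta a)_U([mu]) *)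
definition sigma_entry :: "('a, 'b) monoid_scheme \<Rightarrow> ('a set \<Rightarrow> 'k::field) \<Rightarrow> 'a set
    \<Rightarrow> ('a \<Rightarrow> 'a) set \<Rightarrow> ('a \<Rightarrow> 'a) set \<Rightarrow> 'k" where
  "sigma_entry G c U Lam M =
     (let l = (SOME l. l \<in> Lam); m = (SOME m. m \<in> M)
      in markDelta G c ((\<lambda>u. (l u, m u)) ` U) / of_nat (card (centralizer_of G (l ` U))))"

(* the K-linear endomorphism f_U of K\<overline>Inj(U,G) (vectors = functions InjBar -> K),
   [mu] \<mapsto> sum_[lambda] entry [lambda], extended linearly *)
definition sigma_apply :: "('a, 'b) monoid_scheme \<Rightarrow> ('a set \<Rightarrow> 'k::field) \<Rightarrow> 'a set
    \<Rightarrow> (('a \<Rightarrow> 'a) set \<Rightarrow> 'k) \<Rightarrow> (('a \<Rightarrow> 'a) set \<Rightarrow> 'k)" where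
  "sigma_apply G c U x = (\<lambda>Lam. if Lam \<in> InjBar G U
      then (\<Sum>M\<in>InjBar G U. x M * sigma_entry G c U Lam M) else 0)"

end

theory Submission
  imports Defs
begin

(* An element (g, h) of G x G conjugates the twisted diagonal {(l u, m u) | u in U} into the
   diagonal of W exactly when g h^-1 lies in the transporter T(l, m) = {k | k^-1 (l u) k = m u}
   and h conjugates m(U) into W.  Hence the mark of Delta(a) at the twisted diagonal is |T(l, m)|
   times the mark of a at m(U).  Now T(l, m) is empty unless [l] = [m], and T(l, l) is the
   centralizer of l(U), which cancels the denominator: sigma_G(Delta(a)) acts diagonally,
   multiplying [l] by the mark of a at l(U).  For a = e_V this mark is 1 or 0 according as l(U) is
   conjugate to V or not, and l(U) can be conjugate to V only if U is isomorphic to V. *)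

definition conjugators :: "('a, 'b) monoid_scheme \<Rightarrow> 'a set \<Rightarrow> 'a set \<Rightarrow> 'a set" where
  "conjugators G L H = {x \<in> carrier G. \<forall>y\<in>L. inv\<^bsub>G\<^esub> x \<otimes>\<^bsub>G\<^esub> y \<otimes>\<^bsub>G\<^esub> x \<in> H}"

definition transporter :: "('a, 'b) monoid_scheme \<Rightarrow> 'a set \<Rightarrow> ('a \<Rightarrow> 'a) \<Rightarrow> ('a \<Rightarrow> 'a) \<Rightarrow> 'a set" where
  "transporter G U l m = {k \<in> carrier G. \<forall>u\<in>U. inv\<^bsub>G\<^esub> k \<otimes>\<^bsub>G\<^esub> l u \<otimes>\<^bsub>G\<^esub> k = m u}"

lemma mem_diag_iff: "(a, b) \<in> diag W \<longleftrightarrow> a = b \<and> b \<in> W"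
  by (auto simp: diag_def)

lemma card_diag: "card (diag W) = card W"
  unfolding diag_def by (rule card_image) (auto simp: inj_on_def)

lemma subgroup_diag:
  assumes G: "group G" and W: "subgroup W G"
  shows "subgroup (diag W) (G \<times>\<times> G)"
proof -
  interpret group G by fact
  interpret P: group "G \<times>\<times> G" by (rule DirProd_group[OF G G])
  have Wc: "W \<subseteq> carrier G" using subgroup.subset[OF W] .
  show ?thesis
  proof (rule P.subgroupI)
    show "diag W \<noteq> {}" using subgroup.one_closed[OF W] unfolding diag_def by auto
  qed (use Wc subgroup.m_closed[OF W] subgroup.m_inv_closed[OF W] inv_DirProd[OF G G]
       in \<open>auto simp: diag_def\<close>)
qed

context group
begin

lemma inv_m_cancel_left: "x \<in> carrier G \<Longrightarrow> y \<in> carrier G \<Longrightarrow> inv x \<otimes> (x \<otimes> y) = y"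
  by (simp add: m_assoc[symmetric])

lemma m_inv_cancel_left: "x \<in> carrier G \<Longrightarrow> y \<in> carrier G \<Longrightarrow> x \<otimes> (inv x \<otimes> y) = y"
  by (simp add: m_assoc[symmetric])

lemma lcoset_fixed_iff:
  assumes H: "subgroup H G" and x: "x \<in> carrier G" and y: "y \<in> carrier G"
  shows "y <# (x <# H) = x <# H \<longleftrightarrow> inv x \<otimes> y \<otimes> x \<in> H"
proof -
  have "y <# (x <# H) = x <# H \<longleftrightarrow> (y \<otimes> x) <# H = x <# H"
    using lcos_m_assoc[OF subgroup.subset[OF H] y x] by simp
  also have "\<dots> \<longleftrightarrow> y \<otimes> x \<in> x <# H"
    using l_repr_independence[OF _ x H] lcos_self[OF _ H] x y by (metis m_closed)
  also have "\<dots> \<longleftrightarrow> inv x \<otimes> y \<otimes> x \<in> H"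
    using subgroup.lcos_module_imp[OF H is_group x] subgroup.lcos_module_rev[OF H is_group x] x y
    by (metis m_assoc m_closed inv_closed)
  finally show ?thesis .
qed

lemma card_fixed_cosets:
  assumes H: "subgroup H G" and fin: "finite (carrier G)" and L: "L \<subseteq> carrier G"
  shows "card (fixed_cosets G H L) * card H = card (conjugators G L H)"
proof -
  let ?C = "fixed_cosets G H L"
  have C_sub: "?C \<subseteq> lcosets H"
    unfolding fixed_cosets_def lcosets_of_def LCOSETS_def by auto
  have union: "\<Union>?C = conjugators G L H"
  proof safe
    fix z Z assume "z \<in> Z" "Z \<in> ?C"
    then obtain x where x: "x \<in> carrier G" and Z: "Z = x <# H" and fixed: "\<forall>y\<in>L. y <# Z = Z"
      and z: "z \<in> x <# H"
      unfolding fixed_cosets_def lcosets_of_def by auto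
    have zc: "z \<in> carrier G" using z x H l_coset_carrier by blast
    have "Z = z <# H" using l_repr_independence[OF z x H] Z by simp
    have "inv z \<otimes> y \<otimes> z \<in> H" if y: "y \<in> L" for y
    proof -
      have "y <# (z <# H) = z <# H" using fixed y \<open>Z = z <# H\<close> by simp
      moreover have "y \<in> carrier G" using y L by blast
      ultimately show ?thesis using lcoset_fixed_iff[OF H zc] by simp
    qed
    then show "z \<in> conjugators G L H" using zc unfolding conjugators_def by blast
  next
    fix x assume "x \<in> conjugators G L H"
    then have x: "x \<in> carrier G" and "\<forall>y\<in>L. inv x \<otimes> y \<otimes> x \<in> H"
      unfolding conjugators_def by auto
    then have "x <# H \<in> ?C"
      using lcoset_fixed_iff[OF H x] L unfolding fixed_cosets_def lcosets_of_def by auto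
    then show "x \<in> \<Union>?C" using lcos_self[OF x H] by blast
  qed
  have "finite ?C"
    using C_sub lcosets_subset_PowG[OF H] fin by (meson finite_Pow_iff finite_subset)
  moreover have "\<forall>Z\<in>?C. card Z = card H"
    using C_sub l_card_cosets_equal[OF _ subgroup.subset[OF H] fin] by (metis subsetD)
  moreover have "\<forall>Z1\<in>?C. \<forall>Z2\<in>?C. Z1 \<noteq> Z2 \<longrightarrow> Z1 \<inter> Z2 = {}"
    using C_sub lcos_disjoint[OF H] by blast
  ultimately have "card H * card ?C = card (\<Union>?C)"
    using card_partition[of ?C] union fin unfolding conjugators_def by simp
  then show ?thesis using union by (simp add: mult.commute)
qed

lemma conj_mult:
  assumes "k \<in> carrier G" "h \<in> carrier G" "a \<in> carrier G"
  shows "inv (k \<otimes> h) \<otimes> a \<otimes> (k \<otimes> h) = inv h \<otimes> (inv k \<otimes> a \<otimes> k) \<otimes> h"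
  using assms by (simp add: m_assoc inv_mult_group)

lemma conj_eq_conj_iff:
  assumes g: "g \<in> carrier G" and h: "h \<in> carrier G" and "a \<in> carrier G" "b \<in> carrier G"
  shows "inv g \<otimes> a \<otimes> g = inv h \<otimes> b \<otimes> h \<longleftrightarrow> inv (g \<otimes> inv h) \<otimes> a \<otimes> (g \<otimes> inv h) = b"
proof -
  have "(g \<otimes> inv h) \<otimes> h = g" using g h by (simp add: m_assoc)
  then have "inv g \<otimes> a \<otimes> g = inv h \<otimes> (inv (g \<otimes> inv h) \<otimes> a \<otimes> (g \<otimes> inv h)) \<otimes> h"
    using conj_mult[of "g \<otimes> inv h" h a] assms by simp
  then show ?thesis using assms by simp
qed

lemma mem_conjugators_diag_iff:
  assumes l: "l ` U \<subseteq> carrier G" and m: "m ` U \<subseteq> carrier G"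
    and g: "g \<in> carrier G" and h: "h \<in> carrier G"
  shows "(g, h) \<in> conjugators (G \<times>\<times> G) ((\<lambda>u. (l u, m u)) ` U) (diag W) \<longleftrightarrow>
    g \<otimes> inv h \<in> transporter G U l m \<and> h \<in> conjugators G (m ` U) W"
proof -
  have "inv\<^bsub>G \<times>\<times> G\<^esub> (g, h) = (inv g, inv h)" using inv_DirProd[OF is_group is_group] g h by blast
  then have "(g, h) \<in> conjugators (G \<times>\<times> G) ((\<lambda>u. (l u, m u)) ` U) (diag W) \<longleftrightarrow>
      (\<forall>u\<in>U. inv g \<otimes> l u \<otimes> g = inv h \<otimes> m u \<otimes> h \<and> inv h \<otimes> m u \<otimes> h \<in> W)"
    using g h by (auto simp: conjugators_def mem_diag_iff)
  also have "\<dots> \<longleftrightarrow> g \<otimes> inv h \<in> transporter G U l m \<and> h \<in> conjugators G (m ` U) W"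
    using conj_eq_conj_iff[OF g h] l m g h
    by (auto simp: transporter_def conjugators_def image_subset_iff)
  finally show ?thesis .
qed

lemma card_conjugators_diag:
  assumes l: "l ` U \<subseteq> carrier G" and m: "m ` U \<subseteq> carrier G"
  shows "card (conjugators (G \<times>\<times> G) ((\<lambda>u. (l u, m u)) ` U) (diag W)) =
    card (transporter G U l m) * card (conjugators G (m ` U) W)"
proof -
  let ?A = "conjugators (G \<times>\<times> G) ((\<lambda>u. (l u, m u)) ` U) (diag W)"
  let ?B = "transporter G U l m \<times> conjugators G (m ` U) W"
  have A_carrier: "?A \<subseteq> carrier G \<times> carrier G"
    unfolding conjugators_def by auto
  have B_carrier: "?B \<subseteq> carrier G \<times> carrier G"
    unfolding conjugators_def transporter_def by auto
  have "bij_betw (\<lambda>(g, h). (g \<otimes> inv h, h)) ?A ?B"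
  proof (rule bij_betw_byWitness[where f' = "\<lambda>(k, h). (k \<otimes> h, h)"])
    show "\<forall>p\<in>?A. (\<lambda>(k, h). (k \<otimes> h, h)) ((\<lambda>(g, h). (g \<otimes> inv h, h)) p) = p"
      using A_carrier by (auto simp: m_assoc)
    show "\<forall>p\<in>?B. (\<lambda>(g, h). (g \<otimes> inv h, h)) ((\<lambda>(k, h). (k \<otimes> h, h)) p) = p"
      using B_carrier by (auto simp: m_assoc)
    show "(\<lambda>(g, h). (g \<otimes> inv h, h)) ` ?A \<subseteq> ?B"
      using A_carrier mem_conjugators_diag_iff[OF l m] by auto
    show "(\<lambda>(k, h). (k \<otimes> h, h)) ` ?B \<subseteq> ?A"
    proof
      fix p assume "p \<in> (\<lambda>(k, h). (k \<otimes> h, h)) ` ?B"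
      then obtain k h where p: "p = (k \<otimes> h, h)" and kh: "(k, h) \<in> ?B" by auto
      then have "k \<in> carrier G" "h \<in> carrier G" using B_carrier by auto
      then show "p \<in> ?A"
        using p kh mem_conjugators_diag_iff[OF l m, of "k \<otimes> h" h] by (simp add: m_assoc)
    qed
  qed
  then show ?thesis by (simp add: bij_betw_same_card card_cartesian_product)
qed

lemma card_fixed_cosets_diag:
  assumes fin: "finite (carrier G)" and W: "subgroup W G"
    and l: "l ` U \<subseteq> carrier G" and m: "m ` U \<subseteq> carrier G"
  shows "card (fixed_cosets (G \<times>\<times> G) (diag W) ((\<lambda>u. (l u, m u)) ` U)) =
    card (transporter G U l m) * card (fixed_cosets G W (m ` U))"
proof -
  interpret GG: group "G \<times>\<times> G" by (rule DirProd_group[OF is_group is_group])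
  have "card W > 0"
    using W fin subgroup.one_closed[OF W] subgroup.subset[OF W]
    by (metis card_gt_0_iff empty_iff finite_subset)
  moreover have "card (fixed_cosets (G \<times>\<times> G) (diag W) ((\<lambda>u. (l u, m u)) ` U)) * card W =
      card (transporter G U l m) * card (fixed_cosets G W (m ` U)) * card W"
    using GG.card_fixed_cosets[OF subgroup_diag[OF is_group W], of "(\<lambda>u. (l u, m u)) ` U"]
      card_fixed_cosets[OF W fin m] card_conjugators_diag[OF l m, of W] l m fin
    by (auto simp: card_diag mult.assoc)
  ultimately show ?thesis by simp
qed

lemma markDelta_eq:
  assumes fin: "finite (carrier G)" and l: "l ` U \<subseteq> carrier G" and m: "m ` U \<subseteq> carrier G"
  shows "markDelta G c ((\<lambda>u. (l u, m u)) ` U) = of_nat (card (transporter G U l m)) * markB G c (m ` U)"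
  unfolding markDelta_def markB_def sum_distrib_left
  by (rule sum.cong) (auto simp: card_fixed_cosets_diag[OF fin _ l m])

end

definition conj_hom :: "('a, 'b) monoid_scheme \<Rightarrow> 'a \<Rightarrow> ('a \<Rightarrow> 'a) \<Rightarrow> 'a set \<Rightarrow> 'a \<Rightarrow> 'a" where
  "conj_hom G g l U = restrict (\<lambda>u. g \<otimes>\<^bsub>G\<^esub> l u \<otimes>\<^bsub>G\<^esub> inv\<^bsub>G\<^esub> g) U"

definition inj_orbit :: "('a, 'b) monoid_scheme \<Rightarrow> 'a set \<Rightarrow> ('a \<Rightarrow> 'a) \<Rightarrow> ('a \<Rightarrow> 'a) set" where
  "inj_orbit G U l = {conj_hom G g l U | g. g \<in> carrier G}"

lemma InjBar_eq: "InjBar G U = inj_orbit G U ` Inj G U"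
  unfolding InjBar_def inj_orbit_def conj_hom_def ..

lemma conj_hom_image: "conj_hom G g l U ` U = (\<lambda>x. g \<otimes>\<^bsub>G\<^esub> x \<otimes>\<^bsub>G\<^esub> inv\<^bsub>G\<^esub> g) ` l ` U"
  unfolding conj_hom_def image_image by (rule image_cong) auto

lemma mem_Inj_iff:
  "l \<in> Inj G U \<longleftrightarrow> l \<in> extensional U \<and> (\<forall>u\<in>U. l u \<in> carrier G) \<and>
     (\<forall>x\<in>U. \<forall>y\<in>U. l (x \<otimes>\<^bsub>G\<^esub> y) = l x \<otimes>\<^bsub>G\<^esub> l y) \<and> inj_on l U"
  by (auto simp: Inj_def hom_def)

context group
begin

lemma Inj_image_subset: "l \<in> Inj G U \<Longrightarrow> l ` U \<subseteq> carrier G"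
  by (auto simp: mem_Inj_iff)

lemma conj_hom_in_Inj:
  assumes U: "subgroup U G" and l: "l \<in> Inj G U" and g: "g \<in> carrier G"
  shows "conj_hom G g l U \<in> Inj G U"
  unfolding mem_Inj_iff
proof (intro conjI)
  have lU: "\<forall>u\<in>U. l u \<in> carrier G" and hom: "\<forall>x\<in>U. \<forall>y\<in>U. l (x \<otimes> y) = l x \<otimes> l y"
    and inj: "inj_on l U"
    using l by (auto simp: mem_Inj_iff)
  show "\<forall>u\<in>U. conj_hom G g l U u \<in> carrier G" using lU g by (auto simp: conj_hom_def)
  show "\<forall>x\<in>U. \<forall>y\<in>U. conj_hom G g l U (x \<otimes> y) = conj_hom G g l U x \<otimes> conj_hom G g l U y"
    using hom lU g subgroup.m_closed[OF U] by (auto simp: conj_hom_def m_assoc inv_m_cancel_left)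
  show "inj_on (conj_hom G g l U) U"
    using inj lU g by (auto simp: inj_on_def conj_hom_def)
qed (simp add: conj_hom_def)

lemma conj_hom_conj_hom:
  assumes l: "l \<in> Inj G U" and g: "g \<in> carrier G" and h: "h \<in> carrier G"
  shows "conj_hom G h (conj_hom G g l U) U = conj_hom G (h \<otimes> g) l U"
proof
  fix u
  show "conj_hom G h (conj_hom G g l U) U u = conj_hom G (h \<otimes> g) l U u"
  proof (cases "u \<in> U")
    case True
    then have "l u \<in> carrier G" using Inj_image_subset[OF l] by blast
    then show ?thesis using True g h by (simp add: conj_hom_def m_assoc inv_mult_group)
  qed (simp add: conj_hom_def)
qed

lemma inj_orbit_conj_hom:
  assumes l: "l \<in> Inj G U" and g: "g \<in> carrier G"
  shows "inj_orbit G U (conj_hom G g l U) = inj_orbit G U l"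
proof safe
  fix f assume "f \<in> inj_orbit G U (conj_hom G g l U)"
  then obtain h where h: "h \<in> carrier G" and f: "f = conj_hom G h (conj_hom G g l U) U"
    unfolding inj_orbit_def by blast
  have "f = conj_hom G (h \<otimes> g) l U" using conj_hom_conj_hom[OF l g h] f by simp
  then show "f \<in> inj_orbit G U l" unfolding inj_orbit_def using h g by blast
next
  fix f assume "f \<in> inj_orbit G U l"
  then obtain h where h: "h \<in> carrier G" and f: "f = conj_hom G h l U"
    unfolding inj_orbit_def by blast
  have "h \<otimes> inv g \<otimes> g = h" using h g by (simp add: m_assoc)
  then have "f = conj_hom G (h \<otimes> inv g) (conj_hom G g l U) U"
    using conj_hom_conj_hom[OF l g, of "h \<otimes> inv g"] h g f by simp
  then show "f \<in> inj_orbit G U (conj_hom G g l U)" unfolding inj_orbit_def using h g by blast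
qed

lemma InjBar_memD:
  assumes U: "subgroup U G" and Lam: "Lam \<in> InjBar G U" and f: "f \<in> Lam"
  shows "f \<in> Inj G U" and "inj_orbit G U f = Lam"
proof -
  obtain l g where l: "l \<in> Inj G U" and Lam: "Lam = inj_orbit G U l"
    and g: "g \<in> carrier G" and f: "f = conj_hom G g l U"
    using Lam f unfolding InjBar_eq inj_orbit_def by auto
  show "f \<in> Inj G U" using conj_hom_in_Inj[OF U l g] f by simp
  show "inj_orbit G U f = Lam" using inj_orbit_conj_hom[OF l g] f Lam by simp
qed

lemma some_mem_InjBar: "Lam \<in> InjBar G U \<Longrightarrow> (SOME l. l \<in> Lam) \<in> Lam"
  unfolding some_in_eq InjBar_eq inj_orbit_def by auto

lemma finite_InjBar:
  assumes fin: "finite (carrier G)" and U: "subgroup U G"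
  shows "finite (InjBar G U)"
proof -
  have "Inj G U \<subseteq> PiE U (\<lambda>_. carrier G)"
    by (auto simp: mem_Inj_iff PiE_iff extensional_def)
  moreover have "finite (PiE U (\<lambda>_. carrier G))"
    using fin subgroup.subset[OF U] by (intro finite_PiE) (auto intro: finite_subset)
  ultimately show ?thesis unfolding InjBar_eq by (auto intro: finite_subset)
qed

lemma inj_orbit_eq_if_transporter:
  assumes l: "l \<in> Inj G U" and m: "m \<in> Inj G U" and k: "k \<in> transporter G U l m"
  shows "inj_orbit G U m = inj_orbit G U l"
proof -
  have kc: "k \<in> carrier G" using k by (simp add: transporter_def)
  have "m = conj_hom G (inv k) l U"
    using k m kc by (auto simp: fun_eq_iff conj_hom_def transporter_def mem_Inj_iff extensional_def)
  then show ?thesis using inj_orbit_conj_hom[OF l] kc by simp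
qed

lemma transporter_self:
  assumes "l \<in> Inj G U"
  shows "transporter G U l l = centralizer_of G (l ` U)"
proof -
  have "inv k \<otimes> x \<otimes> k = x \<longleftrightarrow> k \<otimes> x = x \<otimes> k" if "k \<in> carrier G" "x \<in> carrier G" for k x
    using that by (metis inv_solve_left' m_assoc m_closed inv_closed)
  then show ?thesis
    using Inj_image_subset[OF assms] by (auto simp: transporter_def centralizer_of_def)
qed

lemma subgroup_centralizer_of:
  assumes S: "S \<subseteq> carrier G"
  shows "subgroup (centralizer_of G S) G"
proof (rule subgroupI)
  have "\<one> \<in> centralizer_of G S" using S by (auto simp: centralizer_of_def)
  then show "centralizer_of G S \<noteq> {}" by blast
next
  fix a assume a: "a \<in> centralizer_of G S"
  have "inv a \<otimes> x = x \<otimes> inv a" if x: "x \<in> S" for x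
  proof -
    have ac: "a \<in> carrier G" and xc: "x \<in> carrier G" and ax: "a \<otimes> x = x \<otimes> a"
      using a x S by (auto simp: centralizer_of_def)
    have "inv a \<otimes> x = inv a \<otimes> (x \<otimes> a) \<otimes> inv a" using ac xc by (simp add: m_assoc)
    also have "\<dots> = x \<otimes> inv a" using ac xc by (simp add: ax[symmetric] m_assoc[symmetric])
    finally show ?thesis .
  qed
  then show "inv a \<in> centralizer_of G S" using a by (auto simp: centralizer_of_def)
next
  fix a b assume a: "a \<in> centralizer_of G S" and b: "b \<in> centralizer_of G S"
  have "a \<otimes> b \<otimes> x = x \<otimes> (a \<otimes> b)" if x: "x \<in> S" for x
  proof -
    have ac: "a \<in> carrier G" and bc: "b \<in> carrier G" and xc: "x \<in> carrier G"
      and ax: "a \<otimes> x = x \<otimes> a" and bx: "b \<otimes> x = x \<otimes> b"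
      using a b x S by (auto simp: centralizer_of_def)
    have "a \<otimes> b \<otimes> x = a \<otimes> (x \<otimes> b)" using ac bc xc by (simp add: m_assoc bx)
    also have "\<dots> = x \<otimes> a \<otimes> b" using ac bc xc by (simp add: m_assoc[symmetric] ax)
    also have "\<dots> = x \<otimes> (a \<otimes> b)" using ac bc xc by (simp add: m_assoc)
    finally show ?thesis .
  qed
  then show "a \<otimes> b \<in> centralizer_of G S" using a b by (auto simp: centralizer_of_def)
qed (auto simp: centralizer_of_def)

lemma conj_image_conj_image:
  assumes "A \<subseteq> carrier G" "g \<in> carrier G" "h \<in> carrier G"
  shows "(\<lambda>x. g \<otimes> x \<otimes> inv g) ` (\<lambda>x. h \<otimes> x \<otimes> inv h) ` A = (\<lambda>x. (g \<otimes> h) \<otimes> x \<otimes> inv (g \<otimes> h)) ` A"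
  unfolding image_image by (rule image_cong) (use assms in \<open>auto simp: m_assoc inv_mult_group\<close>)

lemma conj_image_inv_cancel:
  assumes A: "A \<subseteq> carrier G" and g: "g \<in> carrier G"
  shows "(\<lambda>x. inv g \<otimes> x \<otimes> g) ` (\<lambda>x. g \<otimes> x \<otimes> inv g) ` A = A"
proof -
  have "(\<lambda>x. inv g \<otimes> x \<otimes> g) ` (\<lambda>x. g \<otimes> x \<otimes> inv g) ` A = (\<lambda>x. x) ` A"
    unfolding image_image
    by (rule image_cong) (use A g in \<open>auto simp: m_assoc inv_m_cancel_left\<close>)
  then show ?thesis by simp
qed

lemma conjugate_conj_image:
  assumes V: "V \<subseteq> carrier G" and g: "g \<in> carrier G" and "conjugate G A V"
  shows "conjugate G ((\<lambda>x. g \<otimes> x \<otimes> inv g) ` A) V"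
proof -
  obtain h where h: "h \<in> carrier G" and A: "A = (\<lambda>v. h \<otimes> v \<otimes> inv h) ` V"
    using assms(3) unfolding conjugate_def by auto
  show ?thesis unfolding conjugate_def A conj_image_conj_image[OF V g h] using g h by blast
qed

lemma conjugate_conj_image_iff:
  assumes A: "A \<subseteq> carrier G" and V: "V \<subseteq> carrier G" and g: "g \<in> carrier G"
  shows "conjugate G ((\<lambda>x. g \<otimes> x \<otimes> inv g) ` A) V \<longleftrightarrow> conjugate G A V"
proof
  assume "conjugate G ((\<lambda>x. g \<otimes> x \<otimes> inv g) ` A) V"
  from conjugate_conj_image[OF V inv_closed[OF g] this]
  have "conjugate G ((\<lambda>x. inv g \<otimes> x \<otimes> g) ` (\<lambda>x. g \<otimes> x \<otimes> inv g) ` A) V"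
    using g by simp
  then show "conjugate G A V" using conj_image_inv_cancel[OF A g] g by simp
qed (rule conjugate_conj_image[OF V g])

lemma conjugate_image_InjBar_cong:
  assumes U: "subgroup U G" and V: "subgroup V G" and Lam: "Lam \<in> InjBar G U"
    and f: "f \<in> Lam" and f': "f' \<in> Lam"
  shows "conjugate G (f' ` U) V \<longleftrightarrow> conjugate G (f ` U) V"
proof -
  have "f' \<in> inj_orbit G U f" using InjBar_memD(2)[OF U Lam f] f' by simp
  then obtain g where g: "g \<in> carrier G" and "f' = conj_hom G g f U"
    unfolding inj_orbit_def by blast
  then have "f' ` U = (\<lambda>x. g \<otimes> x \<otimes> inv g) ` f ` U" by (simp add: conj_hom_image)
  then show ?thesis
    using conjugate_conj_image_iff[OF Inj_image_subset[OF InjBar_memD(1)[OF U Lam f]]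
        subgroup.subset[OF V] g] by simp
qed

lemma subgroup_image_Inj:
  assumes U: "subgroup U G" and m: "m \<in> Inj G U"
  shows "subgroup (m ` U) G"
proof -
  have "group_hom (G\<lparr>carrier := U\<rparr>) G m"
    using subgroup.subgroup_is_group[OF U is_group] m is_group
    unfolding group_hom_def group_hom_axioms_def Inj_def by auto
  then show ?thesis using group_hom.img_is_subgroup by fastforce
qed

lemma of_nat_card_subgroup_neq_0:
  assumes "subgroup H G" and "(of_nat (order G) :: 'k::semiring_1) \<noteq> 0"
  shows "(of_nat (card H) :: 'k) \<noteq> 0"
  using lagrange[OF assms(1)] assms(2) by (metis of_nat_mult mult_zero_right)

lemma sigma_entry_eq:
  assumes fin: "finite (carrier G)" and ord: "(of_nat (order G) :: 'k::field) \<noteq> 0"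
    and U: "subgroup U G" and Lam: "Lam \<in> InjBar G U" and M: "M \<in> InjBar G U"
  shows "sigma_entry G c U Lam M = (if Lam = M then markB G c ((SOME l. l \<in> Lam) ` U) else (0::'k))"
proof -
  define l where "l = (SOME l. l \<in> Lam)"
  define m where "m = (SOME m. m \<in> M)"
  have l: "l \<in> Inj G U" and orbit_l: "inj_orbit G U l = Lam"
    using InjBar_memD[OF U Lam some_mem_InjBar[OF Lam]] unfolding l_def by auto
  have m: "m \<in> Inj G U" and orbit_m: "inj_orbit G U m = M"
    using InjBar_memD[OF U M some_mem_InjBar[OF M]] unfolding m_def by auto
  have entry: "sigma_entry G c U Lam M = of_nat (card (transporter G U l m)) * markB G c (m ` U)
      / of_nat (card (centralizer_of G (l ` U)))"
    unfolding sigma_entry_def Let_def l_def[symmetric] m_def[symmetric]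
      markDelta_eq[OF fin Inj_image_subset[OF l] Inj_image_subset[OF m]] ..
  show ?thesis
  proof (cases "Lam = M")
    case True
    then have "m = l" unfolding l_def m_def by simp
    moreover have "(of_nat (card (centralizer_of G (l ` U))) :: 'k) \<noteq> 0"
      using of_nat_card_subgroup_neq_0[OF subgroup_centralizer_of[OF Inj_image_subset[OF l]] ord] .
    ultimately show ?thesis
      unfolding l_def[symmetric] using entry True by (simp add: transporter_self[OF l])
  next
    case False
    then have "transporter G U l m = {}"
      using inj_orbit_eq_if_transporter[OF l m] orbit_l orbit_m by blast
    then show ?thesis using entry False by simp
  qed
qed

lemma sigma_apply_eq:
  assumes fin: "finite (carrier G)" and ord: "(of_nat (order G) :: 'k::field) \<noteq> 0"
    and U: "subgroup U G"
  shows "sigma_apply G c U x =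
    (\<lambda>Lam. if Lam \<in> InjBar G U then x Lam * markB G c ((SOME l. l \<in> Lam) ` U) else (0::'k))"
proof
  fix Lam
  show "sigma_apply G c U x Lam =
    (if Lam \<in> InjBar G U then x Lam * markB G c ((SOME l. l \<in> Lam) ` U) else 0)"
  proof (cases "Lam \<in> InjBar G U")
    case Lam: True
    have "sigma_apply G c U x Lam =
        (\<Sum>M\<in>InjBar G U. if M = Lam then x M * markB G c ((SOME l. l \<in> Lam) ` U) else 0)"
      unfolding sigma_apply_def using Lam
      by (auto intro!: sum.cong simp: sigma_entry_eq[OF fin ord U Lam])
    then show ?thesis using Lam finite_InjBar[OF fin U] by simp
  qed (simp add: sigma_apply_def)
qed

lemma sigma_apply_eq_if_conjugate:
  assumes fin: "finite (carrier G)" and ord: "(of_nat (order G) :: 'k::field) \<noteq> 0"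
    and U: "subgroup U G" and V: "subgroup V G"
    and e_V: "\<forall>V'. subgroup V' G \<longrightarrow> markB G c V' = (if conjugate G V' V then 1 else (0::'k))"
  shows "sigma_apply G c U x =
    (\<lambda>Lam. if Lam \<in> InjBar G U \<and> (\<exists>l\<in>Lam. conjugate G (l ` U) V) then x Lam else 0)"
proof
  fix Lam
  show "sigma_apply G c U x Lam =
    (if Lam \<in> InjBar G U \<and> (\<exists>l\<in>Lam. conjugate G (l ` U) V) then x Lam else 0)"
  proof (cases "Lam \<in> InjBar G U")
    case Lam: True
    define l where "l = (SOME l. l \<in> Lam)"
    have l: "l \<in> Lam" unfolding l_def by (rule some_mem_InjBar[OF Lam])
    have "markB G c (l ` U) = (if conjugate G (l ` U) V then 1 else 0)"
      using e_V subgroup_image_Inj[OF U InjBar_memD(1)[OF U Lam l]] by blast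
    moreover have "(\<exists>l'\<in>Lam. conjugate G (l' ` U) V) \<longleftrightarrow> conjugate G (l ` U) V"
      using conjugate_image_InjBar_cong[OF U V Lam l] l by blast
    ultimately show ?thesis
      using Lam unfolding sigma_apply_eq[OF fin ord U] l_def[symmetric] by simp
  qed (simp add: sigma_apply_def)
qed

lemma iso_of_conjugate_image:
  assumes U: "subgroup U G" and V: "subgroup V G" and l: "l \<in> Inj G U"
    and "conjugate G (l ` U) V"
  shows "G\<lparr>carrier := U\<rparr> \<cong> G\<lparr>carrier := V\<rparr>"
proof -
  obtain g where g: "g \<in> carrier G" and lU: "l ` U = (\<lambda>v. g \<otimes> v \<otimes> inv g) ` V"
    using assms(4) unfolding conjugate_def by auto
  have lc: "\<forall>u\<in>U. l u \<in> carrier G" and l_mult: "\<forall>x\<in>U. \<forall>y\<in>U. l (x \<otimes> y) = l x \<otimes> l y"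
    and l_inj: "inj_on l U"
    using l by (auto simp: mem_Inj_iff)
  define \<phi> where "\<phi> = (\<lambda>u. inv g \<otimes> l u \<otimes> g)"
  have image: "\<phi> ` U = V"
    unfolding \<phi>_def image_image[symmetric, of "\<lambda>x. inv g \<otimes> x \<otimes> g" l] lU
    using conj_image_inv_cancel[OF subgroup.subset[OF V] g] .
  have "\<phi> \<in> hom (G\<lparr>carrier := U\<rparr>) (G\<lparr>carrier := V\<rparr>)"
    using image l_mult lc g by (auto simp: hom_def \<phi>_def m_assoc m_inv_cancel_left)
  moreover have "inj_on \<phi> U"
    using l_inj lc g by (auto simp: inj_on_def \<phi>_def)
  ultimately have "\<phi> \<in> iso (G\<lparr>carrier := U\<rparr>) (G\<lparr>carrier := V\<rparr>)"
    using image by (simp add: iso_iff)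
  then show ?thesis by (rule is_isoI)
qed

end

theorem proposition3p7:
  fixes G :: "('g, 'b) monoid_scheme" and c :: "'g set \<Rightarrow> 'k::field" and V :: "'g set"
  assumes "group G" and "finite (carrier G)" and "(of_nat (order G) :: 'k) \<noteq> 0"
    and "subgroup V G"
    and e_V: "\<forall>V'. subgroup V' G \<longrightarrow> markB G c V' = (if conjugate G V' V then 1 else 0)"
  shows "(\<forall>U. subgroup U G \<and> \<not> (G\<lparr>carrier := U\<rparr> \<cong> G\<lparr>carrier := V\<rparr>) \<longrightarrow>
            (\<forall>x. sigma_apply G c U x = (\<lambda>_. 0)))
       \<and> (\<forall>U. subgroup U G \<and> (G\<lparr>carrier := U\<rparr> \<cong> G\<lparr>carrier := V\<rparr>) \<longrightarrow>
            (\<forall>x. sigma_apply G c U x =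
               (\<lambda>Lam. if Lam \<in> InjBar G U \<and> (\<exists>l\<in>Lam. conjugate G (l ` U) V) then x Lam else 0)))"
proof -
  interpret group G by fact
  have sigma: "sigma_apply G c U x =
      (\<lambda>Lam. if Lam \<in> InjBar G U \<and> (\<exists>l\<in>Lam. conjugate G (l ` U) V) then x Lam else 0)"
    if "subgroup U G" for U x
    using sigma_apply_eq_if_conjugate[OF assms(2,3) that assms(4) e_V] .
  have "\<not> conjugate G (l ` U) V"
    if "subgroup U G" "\<not> (G\<lparr>carrier := U\<rparr> \<cong> G\<lparr>carrier := V\<rparr>)" "Lam \<in> InjBar G U" "l \<in> Lam"
    for U Lam l
    using iso_of_conjugate_image[OF that(1) assms(4) InjBar_memD(1)[OF that(1,3,4)]] that(2) by blast
  then show ?thesis using sigma by (auto simp: fun_eq_iff)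
qed

end
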